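(* Let $N=\{1,\ldots,n\}$ and $v\in\mathscr{G}_+(n)$. Then $v$ is a vertex of $\mathscr{BG}_+(n)$ if and only if $v$ is balanced and $0$-$1$-valued (i.e., $v(S)\in\{0,1\}$ for all $S\subseteq N$).
   Context: A game on $N$ is a map $v:2^N\to\mathbb{R}$ with $v(\varnothing)=0$. $\mathscr{G}_+(n)$ is the set of games with $v\geqslant 0$ and $v(N)=1$. The core of $v$ is $C(v)=\{x\in\mathbb{R}^N: \sum_{i\in S}x_i\geqslant v(S)\ \forall S\subseteq N,\ \sum_{i\in N}x_i=v(N)\}$; $v$ is balanced iff $C(v)\neq\varnothing$ (equivalently, $\sum_{S\in\mathscr{B}}\lambda^{\mathscr{B}}_Sv(S)\leqslant v(N)$ for every minimal balanced collection $\mathscr{B}\neq\{N\}$ with its balancing weights $\lambda^{\mathscr{B}}_S$). $\mathscr{BG}_+(n)$ is the set of balanced games in $\mathscr{G}_+(n)$, a polytope in $\mathbb{R}^{2^N\setminus\{\varnothing,N\}}$. *)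

theory Defs
  imports "HOL-Analysis.Analysis"
begin

text \<open>Players: a finite type 'n (N = UNIV, n = CARD('n)). A game (indexed by all
coalitions S of N) is a vector in real^('n set); the coordinates at the empty set and N
are fixed by the constraints, so this is an affine copy of the paper's space
R^(2^N minus the empty set and N).\<close>

definition is_game :: "real^('n::finite set) \<Rightarrow> bool" where
  "is_game v \<longleftrightarrow> v $ {} = 0"

definition G_plus :: "(real^('n::finite set)) set" where
  "G_plus = {v. is_game v \<and> (\<forall>S. v $ S \<ge> 0) \<and> v $ UNIV = 1}"

definition core :: "real^('n::finite set) \<Rightarrow> (real^'n) set" where
  "core v = {x. (\<forall>S. (\<Sum>i\<in>S. x $ i) \<ge> v $ S) \<and> (\<Sum>i\<in>UNIV. x $ i) = v $ UNIV}"

definition balanced_game :: "real^('n::finite set) \<Rightarrow> bool" where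
  "balanced_game v \<longleftrightarrow> core v \<noteq> {}"

definition BG_plus :: "(real^('n::finite set)) set" where
  "BG_plus = {v \<in> G_plus. balanced_game v}"

end

theory Submission
  imports Defs
begin

text \<open>Let v be balanced with core allocation x. Splitting each v(S) among the members of S
  in proportion to x writes v as the convex combination, with weights x(i), of games w(i) in
  which i is a veto player and all values are at most 1. Every such game is balanced, since the
  allocation giving everything to i lies in its core, and these games form a box. Hence the
  balanced games are the convex hull of the union of these boxes, so every extreme point is a
  vertex of one of the boxes and therefore 0-1-valued. Conversely, the balanced games lie in
  the unit cube, and a 0-1-valued point of a subset of the unit cube is an extreme point of it.\<close>

lemma convex_combination_eq_lower_bound:
  fixes a b c t :: real
  assumes "0 < t" "t < 1" "c \<le> a" "c \<le> b" "(1 - t) * a + t * b = c"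
  shows "a = c \<and> b = c"
proof -
  have "0 \<le> (1 - t) * (a - c)" "0 \<le> t * (b - c)"
    using assms by simp_all
  moreover have "(1 - t) * (a - c) + t * (b - c) = 0"
    using assms(5) by (simp add: algebra_simps)
  ultimately have "(1 - t) * (a - c) = 0" "t * (b - c) = 0"
    by linarith+
  then show ?thesis
    using assms(1,2) by simp
qed

lemma extreme_point_of_subset_cbox_cart:
  fixes x l u :: "real^'m"
  assumes "x \<in> S" "S \<subseteq> cbox l u" "\<And>k. x $ k = l $ k \<or> x $ k = u $ k"
  shows "x extreme_point_of S"
proof -
  have "x \<notin> open_segment a b" if "a \<in> S" "b \<in> S" for a b
  proof
    assume "x \<in> open_segment a b"
    then obtain t where "a \<noteq> b" "0 < t" "t < 1" and x: "x = (1 - t) *\<^sub>R a + t *\<^sub>R b"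
      by (auto simp: in_segment)
    have "a $ k = b $ k" for k
    proof -
      have bounds: "l $ k \<le> a $ k" "a $ k \<le> u $ k" "l $ k \<le> b $ k" "b $ k \<le> u $ k"
        using that assms(2) by (auto simp: mem_box_cart)
      have xk: "(1 - t) * a $ k + t * b $ k = x $ k"
        using x by simp
      show ?thesis
      proof (cases "x $ k = l $ k")
        case True
        then have "a $ k = l $ k \<and> b $ k = l $ k"
          using bounds xk by (intro convex_combination_eq_lower_bound[OF \<open>0 < t\<close> \<open>t < 1\<close>]) simp_all
        then show ?thesis
          by simp
      next
        case False
        then have "(1 - t) * - a $ k + t * - b $ k = - u $ k"
          using xk assms(3)[of k] by (simp add: algebra_simps)
        then have "- a $ k = - u $ k \<and> - b $ k = - u $ k"
          using bounds by (intro convex_combination_eq_lower_bound[OF \<open>0 < t\<close> \<open>t < 1\<close>]) simp_all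
        then show ?thesis
          by simp
      qed
    qed
    with \<open>a \<noteq> b\<close> show False
      by (simp add: vec_eq_iff)
  qed
  with assms(1) show ?thesis
    unfolding extreme_point_of_def by blast
qed

lemma extreme_point_of_cbox_cart:
  fixes x l u :: "real^'m"
  assumes "x extreme_point_of cbox l u"
  shows "x $ k = l $ k \<or> x $ k = u $ k"
proof (rule ccontr)
  assume "\<not> ?thesis"
  moreover have x: "x \<in> cbox l u"
    using assms by (simp add: extreme_point_of_def)
  ultimately have "l $ k < x $ k" "x $ k < u $ k"
    by (auto simp: mem_box_cart order.order_iff_strict)
  define d where "d = min (x $ k - l $ k) (u $ k - x $ k)"
  have "0 < d"
    using \<open>l $ k < x $ k\<close> \<open>x $ k < u $ k\<close> by (simp add: d_def)
  let ?a = "x - d *\<^sub>R axis k 1" and ?b = "x + d *\<^sub>R axis k 1"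
  have "l $ j \<le> x $ j" "x $ j \<le> u $ j" for j
    using x by (simp_all add: mem_box_cart)
  then have "?a \<in> cbox l u" "?b \<in> cbox l u"
    using \<open>l $ k < x $ k\<close> \<open>x $ k < u $ k\<close> by (auto simp: mem_box_cart axis_def d_def)
  moreover have "x = midpoint ?a ?b"
    by (simp add: midpoint_def vec_eq_iff)
  moreover have "?a \<noteq> ?b"
    using \<open>0 < d\<close> by (auto simp: vec_eq_iff axis_def dest: spec[of _ k])
  ultimately show False
    using assms midpoint_in_open_segment unfolding extreme_point_of_def by metis
qed

lemma core_scaleR_add:
  assumes "x \<in> core a" "y \<in> core b" "0 \<le> s" "0 \<le> t"
  shows "s *\<^sub>R x + t *\<^sub>R y \<in> core (s *\<^sub>R a + t *\<^sub>R b)"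
  using assms
  by (auto simp: core_def sum.distrib sum_distrib_left[symmetric] intro!: add_mono mult_left_mono)

lemma convex_BG_plus: "convex BG_plus"
proof (rule convexI)
  fix a b :: "real^('n::finite set)" and s t :: real
  assume "a \<in> BG_plus" "b \<in> BG_plus" "0 \<le> s" "0 \<le> t" "s + t = 1"
  then show "s *\<^sub>R a + t *\<^sub>R b \<in> BG_plus"
    using core_scaleR_add[of _ a _ b s t]
    by (fastforce simp: BG_plus_def G_plus_def is_game_def balanced_game_def)
qed

lemma BG_plus_subset_unit_cube: "BG_plus \<subseteq> cbox 0 1"
proof
  fix w :: "real^('n::finite set)"
  assume "w \<in> BG_plus"
  then obtain x where x: "x \<in> core w" and w: "w \<in> G_plus"
    by (auto simp: BG_plus_def balanced_game_def)
  have "w $ S \<le> 1" for S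
  proof -
    have "w $ S + w $ (- S) \<le> (\<Sum>i\<in>S. x $ i) + (\<Sum>i\<in>- S. x $ i)"
      using x by (simp add: core_def add_mono)
    also have "\<dots> = 1"
      using x w by (simp add: core_def G_plus_def sum.union_disjoint[symmetric])
    finally have "w $ S + w $ (- S) \<le> 1" .
    moreover have "0 \<le> w $ (- S)"
      using w by (simp add: G_plus_def)
    ultimately show ?thesis
      by linarith
  qed
  with w show "w \<in> cbox 0 1"
    by (simp add: mem_box_cart G_plus_def)
qed

definition veto_games :: "'n::finite \<Rightarrow> (real^('n set)) set" where
  "veto_games i = cbox (\<chi> S. if S = UNIV then 1 else 0) (\<chi> S. if i \<in> S then 1 else 0)"

lemma veto_games_subset_BG_plus: "veto_games i \<subseteq> BG_plus"
proof
  fix w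
  assume "w \<in> veto_games i"
  then have bounds: "(if S = UNIV then 1 else 0) \<le> w $ S" "w $ S \<le> (if i \<in> S then 1 else 0)"
    for S by (simp_all add: veto_games_def mem_box_cart)
  have w: "w $ {} = 0" "w $ UNIV = 1"
    using bounds[of "{}"] bounds[of UNIV] by auto
  have w_nonneg: "0 \<le> w $ S" for S
    by (rule order_trans[OF _ bounds(1)]) simp
  have "(\<Sum>j\<in>S. axis i 1 $ j) = (if i \<in> S then 1 else (0::real))" for S
    by (simp add: axis_def sum.delta)
  then have "axis i 1 \<in> core w"
    using w bounds(2) by (simp add: core_def)
  with w w_nonneg show "w \<in> BG_plus"
    by (auto simp: BG_plus_def G_plus_def is_game_def balanced_game_def)
qed

lemma BG_plus_subset_convex_hull_veto_games:
  fixes v :: "real^('n::finite set)"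
  assumes "v \<in> BG_plus"
  shows "v \<in> convex hull (\<Union>i. veto_games i)"
proof -
  obtain x where x: "x \<in> core v" and v: "v \<in> G_plus"
    using assms by (auto simp: BG_plus_def balanced_game_def)
  have v_le_x: "v $ S \<le> (\<Sum>j\<in>S. x $ j)" and v_nonneg: "0 \<le> v $ S" for S
    using x v by (simp_all add: core_def G_plus_def)
  have x_nonneg: "0 \<le> x $ i" for i
    using v_le_x[of "{i}"] v_nonneg[of "{i}"] by simp
  have x_sum: "(\<Sum>i\<in>UNIV. x $ i) = 1"
    using x v by (simp add: core_def G_plus_def)
  have ratio_bounds: "0 \<le> v $ S / (\<Sum>j\<in>S. x $ j)" "v $ S / (\<Sum>j\<in>S. x $ j) \<le> 1" for S
    using v_le_x[of S] v_nonneg[of S] by (auto simp: divide_le_eq_1)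
  \<comment> \<open>If x(S) = 0 then v(S) = 0, which the junk value v(S) / 0 = 0 reproduces.\<close>
  define w where "w i = (\<chi> S. if i \<in> S then v $ S / (\<Sum>j\<in>S. x $ j) else 0)" for i
  have w_veto: "w i \<in> veto_games i" for i
    using ratio_bounds v x_sum by (auto simp: veto_games_def mem_box_cart w_def G_plus_def)
  have "(\<Sum>i\<in>UNIV. x $ i *\<^sub>R w i) \<in> convex hull (\<Union>i. veto_games i)"
    using w_veto x_nonneg x_sum by (intro convex_sum[OF finite convex_convex_hull]) (auto intro: hull_inc)
  moreover have "v = (\<Sum>i\<in>UNIV. x $ i *\<^sub>R w i)"
  proof (rule vec_eq_iff[THEN iffD2, OF allI])
    fix S
    have "(\<Sum>i\<in>UNIV. x $ i *\<^sub>R w i) $ S = (\<Sum>i\<in>S. x $ i) * (v $ S / (\<Sum>j\<in>S. x $ j))"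
      by (simp add: w_def if_distrib sum.If_cases sum_distrib_right sum_divide_distrib)
    also have "\<dots> = v $ S"
      using v_le_x[of S] v_nonneg[of S] by (cases "(\<Sum>j\<in>S. x $ j) = 0") simp_all
    finally show "v $ S = (\<Sum>i\<in>UNIV. x $ i *\<^sub>R w i) $ S" ..
  qed
  ultimately show ?thesis
    by simp
qed

lemma BG_plus_eq_convex_hull_veto_games: "BG_plus = convex hull (\<Union>i. veto_games i)"
  using BG_plus_subset_convex_hull_veto_games veto_games_subset_BG_plus convex_BG_plus
  by (metis UN_least hull_minimal subsetI subset_antisym)

theorem theorem8:
  fixes v :: "real^('n::finite set)"
  assumes "v \<in> G_plus"
  shows "v extreme_point_of BG_plus \<longleftrightarrow> balanced_game v \<and> (\<forall>S. v $ S \<in> {0, 1})"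
proof
  assume extreme: "v extreme_point_of BG_plus"
  then have "balanced_game v"
    by (simp add: extreme_point_of_def BG_plus_def)
  have "v \<in> (\<Union>i. veto_games i)"
    using extreme by (intro extreme_point_of_convex_hull) (simp add: BG_plus_eq_convex_hull_veto_games)
  then obtain i where "v \<in> veto_games i"
    by blast
  then have extreme_box: "v extreme_point_of veto_games i"
    using extreme veto_games_subset_BG_plus unfolding extreme_point_of_def by blast
  have "v $ S \<in> {0, 1}" for S
    using extreme_point_of_cbox_cart[OF extreme_box[unfolded veto_games_def], of S] by (auto split: if_splits)
  with \<open>balanced_game v\<close> show "balanced_game v \<and> (\<forall>S. v $ S \<in> {0, 1})"
    by blast
next
  assume "balanced_game v \<and> (\<forall>S. v $ S \<in> {0, 1})"
  moreover from this have "v \<in> BG_plus"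
    using assms by (simp add: BG_plus_def)
  ultimately show "v extreme_point_of BG_plus"
    by (intro extreme_point_of_subset_cbox_cart[OF _ BG_plus_subset_unit_cube]) auto
qed

end
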